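(* Serializability supports early release: there exists a (well-formed, unique-writes) history $H$ that is serializable and contains a transaction $T_i$ that releases some variable $x$ early in $H$.
   Context: Model. Shared variables $x,y,\dots$ have domain $\mathbb{N}_0$ and initial value $0$. A transaction $T_i$ executes operations $\mathit{init}_i$ (returns $ok_i$), $\mathit{read}_i(x)$ (returns a value or the abort constant $A_i$), $\mathit{write}_i(x,v)$ (returns $ok_i$ or $A_i$), $\mathit{tryC}_i$ (returns $C_i$ or $A_i$) and possibly $\mathit{tryA}_i$ (returns $A_i$). Each operation consists of an invocation event and a response event. A history $H$ is a sequence of such events; $H|T_i$ is the subsequence of events of $T_i$. Histories are assumed well-formed (each $H|T_i$ alternates invocations/responses, starts with the invocation of $\mathit{init}_i$, has nothing after a $C_i$ or $A_i$ response, no invocation after the invocation of $\mathit{tryC}_i$ or $\mathit{tryA}_i$; transactions of one process are sequential) and to have unique writes (no two write executions write the same value to the same variable, and none writes $0$). $T_i$ is committed in $H$ if $H|T_i$ contains $\mathit{tryC}_i\to C_i$; aborted if $H|T_i$ contains a response $A_i$; commit-pending if it contains the invocation of $\mathit{tryC}_i$ but no response $C_i$ or $A_i$; live otherwise. A completion $\mathrm{Compl}(H)$ is a complete history having $H$ as a prefix such that for each $T_i$, $\mathrm{Compl}(H)|T_i$ equals $H|T_i$ if $T_i$ committed or aborted, $H|T_i$ followed by response $C_i$ if $T_i$ is commit-pending, $H|T_i$ followed by response $A_i$ if $T_i$ has another pending operation, and $H|T_i\cdot[\mathit{tryC}_i\to A_i]$ otherwise. Histories $H,H'$ are equivalent if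 $H|T_i=H'|T_i$ for all $T_i$. Real-time order: $T_i\prec_H T_j$ if the last event of $H|T_i$ precedes the first event of $H|T_j$; $S$ is sequential if no two of its transactions are concurrent (unordered by $\prec_S$). The sequential specification $\mathit{Seq}(x)$ is the set of sequences of complete operation executions on $x$ in which every read returning a value $v$ (not $A_i$) returns the value of the most recent preceding write in the sequence, or $0$ if there is none. A sequential history $S'$ is legal if $S'|x\in\mathit{Seq}(x)$ for every $x$, where $S'|x$ is the subsequence of complete operation executions on $x$. For a sequential $S$ and $T_i\in S$, $\mathrm{vis}(S,T_i)$ is the longest subhistory of $S$ containing exactly $S|T_j$ for those $T_j$ with $j=i$ or ($T_j$ committed in $S$ and $T_j\prec_S T_i$); $T_i$ is legal in $S$ if $\mathrm{vis}(S,T_i)$ is legal. $H$ is serializable iff there is a sequential history $S$ equivalent to some completion of $H$ such that every committed transaction in $S$ is legal in $S$. A read execution $r_j(x)\to v$ in $H|T_j$ is non-local if it is not preceded in $H|T_j$ by a write on $x$. Early release: $T_i$ releases $x$ early in $H$ iff there is a prefix $P$ of $H$ in which $T_i$ is live and some transaction $T_j$ has in $P|T_j$ a complete non-local read $r_j(x)\to v$ preceded in $P$ by a write execution $w_i(x,v)$ in $P|T_i$. A property supports early release iff some history satisfying it contains a transaction that releases some variable early. *)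

theory Defs
  imports Main
begin

type_synonym tid = nat
type_synonym var = nat
type_synonym val = nat

datatype op = Init | Read var | Write var val | TryC | TryA
datatype resp = Ok | Val val | Abort | Commit
datatype event = Inv tid op | Resp tid resp

fun tid_of :: "event \<Rightarrow> tid" where
  "tid_of (Inv i _) = i"
| "tid_of (Resp i _) = i"

type_synonym history = "event list"

definition proj :: "history \<Rightarrow> tid \<Rightarrow> history" where
  "proj H i = [e \<leftarrow> H. tid_of e = i]"

definition txns :: "history \<Rightarrow> tid set" where
  "txns H = tid_of ` set H"

text \<open>Complete operation executions of a history, in the order of their invocations:
  an invocation of T_i paired with the next event of T_i, provided that is a response.\<close>
fun ops :: "history \<Rightarrow> (tid \<times> op \<times> resp) list" where
  "ops [] = []"
| "ops (Inv i p # es) =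
     (case [e \<leftarrow> es. tid_of e = i] of
        Resp _ r # _ \<Rightarrow> (i, p, r) # ops es
      | _ \<Rightarrow> ops es)"
| "ops (Resp i r # es) = ops es"

definition op_exec :: "history \<Rightarrow> nat \<Rightarrow> nat \<Rightarrow> tid \<Rightarrow> op \<Rightarrow> resp \<Rightarrow> bool" where
  "op_exec H k k' i p r \<longleftrightarrow> k < k' \<and> k' < length H \<and> H ! k = Inv i p \<and> H ! k' = Resp i r \<and>
     (\<forall>m. k < m \<and> m < k' \<longrightarrow> tid_of (H ! m) \<noteq> i)"

fun resp_ok :: "op \<Rightarrow> resp \<Rightarrow> bool" where
  "resp_ok Init r = (r = Ok)"
| "resp_ok (Read x) r = ((\<exists>v. r = Val v) \<or> r = Abort)"
| "resp_ok (Write x v) r = (r = Ok \<or> r = Abort)"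
| "resp_ok TryC r = (r = Commit \<or> r = Abort)"
| "resp_ok TryA r = (r = Abort)"

fun wf_inv :: "history \<Rightarrow> bool" and wf_resp :: "op \<Rightarrow> history \<Rightarrow> bool" where
  "wf_inv [] = True"
| "wf_inv (Inv i p # es) = (p \<noteq> Init \<and> wf_resp p es)"
| "wf_inv (Resp i r # es) = False"
| "wf_resp p [] = True"
| "wf_resp p (Inv i q # es) = False"
| "wf_resp p (Resp i r # es) =
     (resp_ok p r \<and> (if r = Abort \<or> r = Commit then es = [] else wf_inv es))"

fun wf_tx :: "history \<Rightarrow> bool" where
  "wf_tx [] = True"
| "wf_tx (Inv i Init # es) = wf_resp Init es"
| "wf_tx (_ # es) = False"

definition positions :: "history \<Rightarrow> tid \<Rightarrow> nat set" where
  "positions H i = {k. k < length H \<and> tid_of (H ! k) = i}"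

definition prec :: "history \<Rightarrow> tid \<Rightarrow> tid \<Rightarrow> bool" where
  "prec H i j \<longleftrightarrow> i \<in> txns H \<and> j \<in> txns H \<and>
     (\<forall>a \<in> positions H i. \<forall>b \<in> positions H j. a < b)"

definition sequential :: "history \<Rightarrow> bool" where
  "sequential S \<longleftrightarrow> (\<forall>i \<in> txns S. \<forall>j \<in> txns S. i \<noteq> j \<longrightarrow> prec S i j \<or> prec S j i)"

text \<open>Each H|T_i is well formed, and transactions executed by the same process
  (for some assignment of transactions to processes) are sequential.\<close>
definition well_formed :: "history \<Rightarrow> bool" where
  "well_formed H \<longleftrightarrow> (\<forall>i. wf_tx (proj H i)) \<and>
     (\<exists>proc :: tid \<Rightarrow> nat. \<forall>i \<in> txns H. \<forall>j \<in> txns H.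
        i \<noteq> j \<and> proc i = proc j \<longrightarrow> prec H i j \<or> prec H j i)"

definition unique_writes :: "history \<Rightarrow> bool" where
  "unique_writes H \<longleftrightarrow>
     (\<forall>a < length H. \<forall>b < length H. \<forall>i j x v.
        H ! a = Inv i (Write x v) \<and> H ! b = Inv j (Write x v) \<longrightarrow> a = b) \<and>
     (\<forall>i x. Inv i (Write x 0) \<notin> set H)"

definition committed :: "history \<Rightarrow> tid \<Rightarrow> bool" where
  "committed H i \<longleftrightarrow> (i, TryC, Commit) \<in> set (ops (proj H i))"

definition aborted :: "history \<Rightarrow> tid \<Rightarrow> bool" where
  "aborted H i \<longleftrightarrow> Resp i Abort \<in> set H"

definition commit_pending :: "history \<Rightarrow> tid \<Rightarrow> bool" where
  "commit_pending H i \<longleftrightarrow> Inv i TryC \<in> set H \<and> \<not> committed H i \<and> \<not> aborted H i"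

definition live :: "history \<Rightarrow> tid \<Rightarrow> bool" where
  "live H i \<longleftrightarrow> i \<in> txns H \<and> \<not> committed H i \<and> \<not> aborted H i \<and> \<not> commit_pending H i"

definition has_pending_op :: "history \<Rightarrow> tid \<Rightarrow> bool" where
  "has_pending_op H i \<longleftrightarrow> proj H i \<noteq> [] \<and> (\<exists>p. last (proj H i) = Inv i p)"

definition compl_proj :: "history \<Rightarrow> tid \<Rightarrow> history" where
  "compl_proj H i =
     (if i \<notin> txns H \<or> committed H i \<or> aborted H i then proj H i
      else if commit_pending H i then proj H i @ [Resp i Commit]
      else if has_pending_op H i then proj H i @ [Resp i Abort]
      else proj H i @ [Inv i TryC, Resp i Abort])"

definition complete_history :: "history \<Rightarrow> bool" where
  "complete_history H \<longleftrightarrow> (\<forall>i \<in> txns H. committed H i \<or> aborted H i)"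

definition is_completion :: "history \<Rightarrow> history \<Rightarrow> bool" where
  "is_completion H C \<longleftrightarrow> complete_history C \<and> (\<exists>s. C = H @ s) \<and>
     (\<forall>i. proj C i = compl_proj H i)"

definition equivalent :: "history \<Rightarrow> history \<Rightarrow> bool" where
  "equivalent H H' \<longleftrightarrow> (\<forall>i. proj H i = proj H' i)"

definition on_var :: "var \<Rightarrow> tid \<times> op \<times> resp \<Rightarrow> bool" where
  "on_var x e \<longleftrightarrow> (fst (snd e) = Read x \<or> (\<exists>v. fst (snd e) = Write x v))"

text \<open>Membership in Seq(x), starting from current value cur: each read returning a value
  returns the value of the most recent preceding (successful) write, or the initial value.\<close>
fun seq_ok :: "val \<Rightarrow> (tid \<times> op \<times> resp) list \<Rightarrow> bool" where
  "seq_ok cur [] = True"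
| "seq_ok cur ((i, Read y, Val v) # rest) = (v = cur \<and> seq_ok cur rest)"
| "seq_ok cur ((i, Write y v, Ok) # rest) = seq_ok v rest"
| "seq_ok cur (_ # rest) = seq_ok cur rest"

definition in_Seq :: "(tid \<times> op \<times> resp) list \<Rightarrow> bool" where
  "in_Seq l \<longleftrightarrow> seq_ok 0 l"

definition legal :: "history \<Rightarrow> bool" where
  "legal S \<longleftrightarrow> (\<forall>x. in_Seq (filter (on_var x) (ops S)))"

definition vis :: "history \<Rightarrow> tid \<Rightarrow> history" where
  "vis S i = [e \<leftarrow> S. tid_of e = i \<or> (committed S (tid_of e) \<and> prec S (tid_of e) i)]"

definition legal_in :: "history \<Rightarrow> tid \<Rightarrow> bool" where
  "legal_in S i \<longleftrightarrow> legal (vis S i)"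

definition serializable :: "history \<Rightarrow> bool" where
  "serializable H \<longleftrightarrow> (\<exists>C S. is_completion H C \<and> sequential S \<and> equivalent S C \<and>
     (\<forall>i \<in> txns S. committed S i \<longrightarrow> legal_in S i))"

definition releases_early :: "history \<Rightarrow> tid \<Rightarrow> var \<Rightarrow> bool" where
  "releases_early H i x \<longleftrightarrow> (\<exists>n. let P = take n H in live P i \<and>
     (\<exists>j v k k' m m' r. op_exec P k k' i (Write x v) r \<and> op_exec P m m' j (Read x) (Val v) \<and>
        k' < m \<and> \<not> (\<exists>l < m. \<exists>v'. P ! l = Inv j (Write x v'))))"

definition supports_early_release :: "(history \<Rightarrow> bool) \<Rightarrow> bool" where
  "supports_early_release Prop \<longleftrightarrow> (\<exists>H. Prop H \<and> (\<exists>i x. releases_early H i x))"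

end

theory Submission
  imports Defs
begin

text \<open>T_1 writes 1 to x and, while T_1 is still live, T_2 reads that value. Neither
  transaction ever commits, so in the completion both abort; serializability constrains
  only committed transactions, hence running T_1 and then T_2 sequentially serializes
  the history.\<close>

lemma committed_eq_if_proj_eq:
  assumes "proj H i = proj H' i"
  shows "committed H i \<longleftrightarrow> committed H' i"
  using assms by (simp add: committed_def)

lemma serializable_if_no_commits:
  assumes "is_completion H C" and "sequential S" and "equivalent S C"
    and "\<And>i. \<not> committed C i"
  shows "serializable H"
proof -
  have "\<not> committed S i" for i
    using assms(3,4) committed_eq_if_proj_eq by (metis equivalent_def)
  then show ?thesis
    unfolding serializable_def using assms(1-3) by blast
qed

definition release_history :: history where
  "release_history = [Inv 1 Init, Resp 1 Ok, Inv 1 (Write 0 1), Resp 1 Ok,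
                      Inv 2 Init, Resp 2 Ok, Inv 2 (Read 0), Resp 2 (Val 1)]"

definition release_completion :: history where
  "release_completion = release_history @ [Inv 1 TryC, Resp 1 Abort, Inv 2 TryC, Resp 2 Abort]"

definition release_serialization :: history where
  "release_serialization =
     [Inv 1 Init, Resp 1 Ok, Inv 1 (Write 0 1), Resp 1 Ok, Inv 1 TryC, Resp 1 Abort,
      Inv 2 Init, Resp 2 Ok, Inv 2 (Read 0), Resp 2 (Val 1), Inv 2 TryC, Resp 2 Abort]"

lemmas release_defs = release_history_def release_completion_def release_serialization_def

lemma txns_release_history: "txns release_history = {1, 2}"
  by (auto simp: txns_def release_history_def)

lemma txns_release_serialization: "txns release_serialization = {1, 2}"
  by (auto simp: txns_def release_serialization_def)

lemma proj_release_history: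
  "proj release_history i =
     (if i = 1 then [Inv 1 Init, Resp 1 Ok, Inv 1 (Write 0 1), Resp 1 Ok]
      else if i = 2 then [Inv 2 Init, Resp 2 Ok, Inv 2 (Read 0), Resp 2 (Val 1)] else [])"
  by (auto simp: proj_def release_history_def)

lemma proj_release_completion:
  "proj release_completion i = proj release_history i @
     (if i = 1 \<or> i = 2 then [Inv i TryC, Resp i Abort] else [])"
  by (auto simp: proj_def release_defs)

lemma proj_release_serialization: "proj release_serialization i = proj release_completion i"
  by (auto simp: proj_def release_defs)

lemma positions_release_history:
  "positions release_history 1 = {0..3}" "positions release_history 2 = {4..7}"
  by (auto simp: positions_def release_history_def less_Suc_eq nth_Cons' numeral_eq_Suc)

lemma positions_release_serialization:
  "positions release_serialization 1 = {0..5}" "positions release_serialization 2 = {6..11}"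
  by (auto simp: positions_def release_serialization_def less_Suc_eq nth_Cons' numeral_eq_Suc)

lemma well_formed_release_history: "well_formed release_history"
proof -
  have "prec release_history 1 2"
    unfolding prec_def positions_release_history by (auto simp: txns_release_history)
  then show ?thesis
    unfolding well_formed_def
    by (auto simp: proj_release_history txns_release_history intro!: exI[of _ id])
qed

lemma unique_writes_release_history: "unique_writes release_history"
  by (auto simp: unique_writes_def release_history_def less_Suc_eq nth_Cons')

lemma is_completion_release: "is_completion release_history release_completion"
  unfolding is_completion_def complete_history_def
proof (intro conjI allI ballI)
  fix i assume "i \<in> txns release_completion"
  then show "committed release_completion i \<or> aborted release_completion i"
    by (auto simp: txns_def aborted_def release_defs)
next
  show "\<exists>s. release_completion = release_history @ s"
    by (simp add: release_completion_def)
next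
  fix i
  have "\<not> committed release_history i" "\<not> has_pending_op release_history i"
    by (simp_all add: committed_def has_pending_op_def proj_release_history)
  moreover have "\<not> aborted release_history i" "\<not> commit_pending release_history i"
    by (auto simp: aborted_def commit_pending_def release_history_def)
  ultimately show "proj release_completion i = compl_proj release_history i"
    by (auto simp: compl_proj_def txns_release_history proj_release_completion)
qed

lemma sequential_release_serialization: "sequential release_serialization"
proof -
  have "prec release_serialization 1 2"
    unfolding prec_def positions_release_serialization by (auto simp: txns_release_serialization)
  then show ?thesis
    by (auto simp: sequential_def txns_release_serialization)
qed

lemma serializable_release_history: "serializable release_history"
proof (rule serializable_if_no_commits)
  show "is_completion release_history release_completion"
    by (rule is_completion_release)
  show "sequential release_serialization"
    by (rule sequential_release_serialization)
  show "equivalent release_serialization release_completion"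
    by (simp add: equivalent_def proj_release_serialization)
  show "\<not> committed release_completion i" for i
    by (simp add: committed_def proj_release_completion proj_release_history)
qed

lemma releases_early_release_history: "releases_early release_history 1 0"
proof -
  have live: "live release_history 1"
    by (simp add: release_history_def live_def txns_def committed_def aborted_def
        commit_pending_def proj_def)
  have write_exec: "op_exec release_history 2 3 1 (Write 0 1) Ok"
    and read_exec: "op_exec release_history 6 7 2 (Read 0) (Val 1)"
    by (auto simp: op_exec_def release_history_def less_Suc_eq nth_Cons')
  have no_local_write: "\<not> (\<exists>l < 6. \<exists>v'. release_history ! l = Inv 2 (Write 0 v'))"
    by (auto simp: release_history_def less_Suc_eq nth_Cons' numeral_eq_Suc)
  have "take 8 release_history = release_history" and "(3::nat) < 6"
    by (simp_all add: release_history_def)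
  then show ?thesis
    unfolding releases_early_def Let_def using live write_exec read_exec no_local_write
    by (intro exI[of _ 8]) (simp only:, blast)
qed

theorem mainTheorem1:
  shows "supports_early_release (\<lambda>H. well_formed H \<and> unique_writes H \<and> serializable H)"
  unfolding supports_early_release_def
  using well_formed_release_history unique_writes_release_history
    serializable_release_history releases_early_release_history by blast

end
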